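(* Let $C$ be a complex scheme of even type. Then the entries of $\vec c$ are: 1. $\vec c_{u_1}=-4(\Lambda^--\Lambda^+)$; 2. $\vec c_{u_2}=2(\Lambda^--\Lambda^+)$; 3. $\vec c_{u_3}=2(\Lambda^--\Lambda^+)$; 4. for each region $R$, $\vec c_R=(-1)^{\mathrm{par}(R)}\,2(\Lambda^-_R-\Lambda^+_R)$; 5. for each oval $o$, $\vec c_o=\vec s_o\big(4+4(\Pi^-_o-\Pi^+_o)\big)$.
   Context: A complex scheme $C$ in $\mathbb{R}P^2$ is a finite collection of disjoint smooth simple closed curves, up to isotopy, at most one of which is one-sided. The two-sided components are ovals, and $C$ carries a semi-orientation (orientations of all components up to simultaneous reversal). $C$ has odd type if it has a one-sided component $J$ and even type otherwise; in the even case an auxiliary oriented one-sided curve $J$ disjoint from the ovals is fixed. Numerical characteristics: - Regions are the components of $\mathbb{R}P^2\setminus(C\cup J)$, and the outer region $R_1$ is the one whose closure meets $J$. The parity $\mathrm{par}$ of a region or oval is the parity of the number of ovals crossed to reach $R_1$. - For an oval $o$ bounding a disk $D_o$ and $x\in\mathrm{int}D_o$, one has $[o]=\pm2[J]$ in $H_1(\mathbb{R}P^2\setminus\{x\})$; $o$ is negative if $[o]=2[J]$, positive otherwise, and $\epsilon(o)=\pm1$ accordingly. $\Lambda^\pm$ is the number of positive/negative ovals. - $\Lambda^\pm_R$ is the number of positive/negative ovals $o$ with $R\subset D_o$. - Two ovals form an injective pair if they bound an annulus. The pair is positive if their orientations are the boundary orientation of some orientation of the annulus, and negative otherwise. $\Pi^\pm_o$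 is the number of ovals forming a positive/negative injective pair with $o$. $\Gamma(C)$ is the weighted tree with vertices $R$ (weight $2\chi(R)$) for each region, $o$ (weight $0$) for each oval, and $u_1,u_2,u_3$ (weights $1,2,2$). Its edges are $Ro$ for $o\subset\partial R$, and $u_1u_2$, $u_1u_3$, $u_1R_1$. $A_\Gamma$ has the weights on the diagonal and $1$ for adjacent vertices, $0$ otherwise. $\vec s$ is indexed by vertices with $\vec s_{u_2}=1$ if $C$ has odd type (else $0$), $\vec s_o=(-1)^{\mathrm{par}(o)+1}\epsilon(o)$ for ovals $o$, and $0$ elsewhere. Finally $\vec c=-2\vec sA_\Gamma^{-1}$. *)

theory Defs
  imports Complex_Main
begin

text \<open>Combinatorial model of a complex scheme of even type in RP^2.
  Ovals form a finite set; par x = Some p means that x lies directly inside p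
  (p is the innermost oval whose disk contains x), par x = None means x is
  outermost.  eps x in {1,-1} is the sign epsilon(x) of the (semi-)oriented oval
  x with respect to the fixed oriented auxiliary one-sided curve J.\<close>

definition enc_rel :: "'a set \<Rightarrow> ('a \<Rightarrow> 'a option) \<Rightarrow> ('a \<times> 'a) set" where
  "enc_rel ovals par = {(x, p). x \<in> ovals \<and> par x = Some p}"

definition even_scheme :: "'a set \<Rightarrow> ('a \<Rightarrow> 'a option) \<Rightarrow> ('a \<Rightarrow> int) \<Rightarrow> bool" where
  "even_scheme ovals par eps \<longleftrightarrow>
     finite ovals \<and>
     (\<forall>x\<in>ovals. \<forall>p. par x = Some p \<longrightarrow> p \<in> ovals) \<and>
     acyclic (enc_rel ovals par) \<and>
     (\<forall>x\<in>ovals. eps x = 1 \<or> eps x = -1)"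

definition inside :: "'a set \<Rightarrow> ('a \<Rightarrow> 'a option) \<Rightarrow> 'a \<Rightarrow> 'a \<Rightarrow> bool" where
  "inside ovals par x p \<longleftrightarrow> (x, p) \<in> (enc_rel ovals par)\<^sup>+"

definition depth :: "'a set \<Rightarrow> ('a \<Rightarrow> 'a option) \<Rightarrow> 'a \<Rightarrow> nat" where
  "depth ovals par x = card {p. inside ovals par x p}"

definition children :: "'a set \<Rightarrow> ('a \<Rightarrow> 'a option) \<Rightarrow> 'a \<Rightarrow> 'a set" where
  "children ovals par p = {x \<in> ovals. par x = Some p}"

definition roots :: "'a set \<Rightarrow> ('a \<Rightarrow> 'a option) \<Rightarrow> 'a set" where
  "roots ovals par = {x \<in> ovals. par x = None}"

text \<open>Vertices of Gamma(C): u1,u2,u3, the outer region R_1, the region RIn p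
  directly inside the oval p (bounded by p and the children of p), and the ovals.\<close>
datatype 'a gvert = U1 | U2 | U3 | ROut | RIn 'a | Ov 'a

definition regions :: "'a set \<Rightarrow> 'a gvert set" where
  "regions ovals = insert ROut (RIn ` ovals)"

definition verts :: "'a set \<Rightarrow> 'a gvert set" where
  "verts ovals = {U1, U2, U3} \<union> regions ovals \<union> Ov ` ovals"

text \<open>Euler characteristic of a region (component of RP^2 minus (C union J)).
  R_1 cut along J is an open disk minus the outermost closed disks.\<close>
fun region_chi :: "'a set \<Rightarrow> ('a \<Rightarrow> 'a option) \<Rightarrow> 'a gvert \<Rightarrow> int" where
  "region_chi ovals par ROut = 1 - int (card (roots ovals par))"
| "region_chi ovals par (RIn p) = 1 - int (card (children ovals par p))"
| "region_chi ovals par _ = 0"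

fun weight :: "'a set \<Rightarrow> ('a \<Rightarrow> 'a option) \<Rightarrow> 'a gvert \<Rightarrow> int" where
  "weight ovals par U1 = 1"
| "weight ovals par U2 = 2"
| "weight ovals par U3 = 2"
| "weight ovals par ROut = 2 * region_chi ovals par ROut"
| "weight ovals par (RIn p) = 2 * region_chi ovals par (RIn p)"
| "weight ovals par (Ov x) = 0"

definition edges :: "'a set \<Rightarrow> ('a \<Rightarrow> 'a option) \<Rightarrow> ('a gvert \<times> 'a gvert) set" where
  "edges ovals par =
     {(U1, U2), (U1, U3), (U1, ROut)}
     \<union> {(ROut, Ov x) | x. x \<in> ovals \<and> par x = None}
     \<union> {(RIn p, Ov x) | x p. x \<in> ovals \<and> par x = Some p}
     \<union> {(RIn x, Ov x) | x. x \<in> ovals}"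

definition adjacent :: "'a set \<Rightarrow> ('a \<Rightarrow> 'a option) \<Rightarrow> 'a gvert \<Rightarrow> 'a gvert \<Rightarrow> bool" where
  "adjacent ovals par v w \<longleftrightarrow> (v, w) \<in> edges ovals par \<or> (w, v) \<in> edges ovals par"

definition gamma_mat :: "'a set \<Rightarrow> ('a \<Rightarrow> 'a option) \<Rightarrow> 'a gvert \<Rightarrow> 'a gvert \<Rightarrow> real" where
  "gamma_mat ovals par v w =
     (if v = w then real_of_int (weight ovals par v)
      else if adjacent ovals par v w then 1 else 0)"

fun vpar :: "'a set \<Rightarrow> ('a \<Rightarrow> 'a option) \<Rightarrow> 'a gvert \<Rightarrow> nat" where
  "vpar ovals par ROut = 0"
| "vpar ovals par (RIn p) = depth ovals par p + 1"
| "vpar ovals par (Ov x) = depth ovals par x"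
| "vpar ovals par _ = 0"

text \<open>The vector s (even type, so s_{u2} = 0).\<close>
definition s_vec :: "'a set \<Rightarrow> ('a \<Rightarrow> 'a option) \<Rightarrow> ('a \<Rightarrow> int) \<Rightarrow> 'a gvert \<Rightarrow> real" where
  "s_vec ovals par eps v =
     (case v of Ov x \<Rightarrow> (-1) ^ (vpar ovals par (Ov x) + 1) * real_of_int (eps x) | _ \<Rightarrow> 0)"

definition is_inverse_on :: "'v set \<Rightarrow> ('v \<Rightarrow> 'v \<Rightarrow> real) \<Rightarrow> ('v \<Rightarrow> 'v \<Rightarrow> real) \<Rightarrow> bool" where
  "is_inverse_on V A B \<longleftrightarrow>
     (\<forall>v\<in>V. \<forall>w\<in>V. (\<Sum>u\<in>V. A v u * B u w) = (if v = w then 1 else 0)) \<and>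
     (\<forall>v\<in>V. \<forall>w\<in>V. (\<Sum>u\<in>V. B v u * A u w) = (if v = w then 1 else 0))"

definition invertible_on :: "'v set \<Rightarrow> ('v \<Rightarrow> 'v \<Rightarrow> real) \<Rightarrow> bool" where
  "invertible_on V A \<longleftrightarrow> (\<exists>B. is_inverse_on V A B)"

definition inverse_on :: "'v set \<Rightarrow> ('v \<Rightarrow> 'v \<Rightarrow> real) \<Rightarrow> 'v \<Rightarrow> 'v \<Rightarrow> real" where
  "inverse_on V A = (SOME B. is_inverse_on V A B)"

definition c_vec :: "'a set \<Rightarrow> ('a \<Rightarrow> 'a option) \<Rightarrow> ('a \<Rightarrow> int) \<Rightarrow> 'a gvert \<Rightarrow> real" where
  "c_vec ovals par eps v =
     -2 * (\<Sum>w\<in>verts ovals. s_vec ovals par eps w * inverse_on (verts ovals) (gamma_mat ovals par) w v)"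

definition Lam_plus :: "'a set \<Rightarrow> ('a \<Rightarrow> int) \<Rightarrow> nat" where
  "Lam_plus ovals eps = card {x \<in> ovals. eps x = 1}"
definition Lam_minus :: "'a set \<Rightarrow> ('a \<Rightarrow> int) \<Rightarrow> nat" where
  "Lam_minus ovals eps = card {x \<in> ovals. eps x = -1}"

fun region_in_disk :: "'a set \<Rightarrow> ('a \<Rightarrow> 'a option) \<Rightarrow> 'a gvert \<Rightarrow> 'a \<Rightarrow> bool" where
  "region_in_disk ovals par (RIn p) x \<longleftrightarrow> x \<in> ovals \<and> (p = x \<or> inside ovals par p x)"
| "region_in_disk ovals par _ x \<longleftrightarrow> False"

definition Lam_plus_R :: "'a set \<Rightarrow> ('a \<Rightarrow> 'a option) \<Rightarrow> ('a \<Rightarrow> int) \<Rightarrow> 'a gvert \<Rightarrow> nat" where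
  "Lam_plus_R ovals par eps R = card {x \<in> ovals. eps x = 1 \<and> region_in_disk ovals par R x}"
definition Lam_minus_R :: "'a set \<Rightarrow> ('a \<Rightarrow> 'a option) \<Rightarrow> ('a \<Rightarrow> int) \<Rightarrow> 'a gvert \<Rightarrow> nat" where
  "Lam_minus_R ovals par eps R = card {x \<in> ovals. eps x = -1 \<and> region_in_disk ovals par R x}"

text \<open>Injective pairs: two ovals bound an annulus iff one lies inside the disk of
  the other.  The pair is positive iff the orientations are the boundary
  orientation of the annulus, i.e. iff the two (concentric) ovals have opposite
  homology classes, i.e. opposite signs eps.\<close>
definition injective_pair :: "'a set \<Rightarrow> ('a \<Rightarrow> 'a option) \<Rightarrow> 'a \<Rightarrow> 'a \<Rightarrow> bool" where
  "injective_pair ovals par x y \<longleftrightarrow>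
     x \<in> ovals \<and> y \<in> ovals \<and> (inside ovals par x y \<or> inside ovals par y x)"

definition Pi_plus :: "'a set \<Rightarrow> ('a \<Rightarrow> 'a option) \<Rightarrow> ('a \<Rightarrow> int) \<Rightarrow> 'a \<Rightarrow> nat" where
  "Pi_plus ovals par eps x = card {y \<in> ovals. injective_pair ovals par x y \<and> eps y \<noteq> eps x}"
definition Pi_minus :: "'a set \<Rightarrow> ('a \<Rightarrow> 'a option) \<Rightarrow> ('a \<Rightarrow> int) \<Rightarrow> 'a \<Rightarrow> nat" where
  "Pi_minus ovals par eps x = card {y \<in> ovals. injective_pair ovals par x y \<and> eps y = eps x}"

end

theory Submission
  imports Defs
begin

(* A_Gamma has an explicit inverse B.  Put sigma(o) = (-1)^depth(o), and o <= o' when the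
   disk of o' contains o.  Besides entries involving u_1, u_2, u_3 and R_1, B pairs the
   region directly inside p with every oval o >= p by sigma(p) sigma(o), and any two
   comparable ovals o, o' by -2 sigma(o) sigma(o').  Checking A_Gamma B = 1 row by row comes
   down to two counting facts about the nesting forest: above each oval lies exactly one
   outermost oval, and for o < p exactly one child of p lies above o.  Since s vanishes off
   the ovals, c is a signed combination of the oval rows of B, so every entry is a signed
   count of ovals: all ovals for the u_i, the ovals whose disk contains R for a region R,
   and o together with its injective partners for an oval o. *)

lemma sum_if_const:
  "finite A \<Longrightarrow> (\<Sum>x\<in>A. if P x then c else 0) = of_nat (card {x\<in>A. P x}) * c"
  by (simp add: sum.If_cases Int_def)

lemma is_inverse_on_unique:
  assumes "finite V" "is_inverse_on V A B" "is_inverse_on V A B'" "v \<in> V" "w \<in> V"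
  shows "B' v w = B v w"
proof -
  have "B' v w = (\<Sum>u\<in>V. B' v u * (if u = w then 1 else 0))"
    using assms(1,5) by (simp add: if_distrib sum.delta cong: if_cong)
  also have "\<dots> = (\<Sum>u\<in>V. B' v u * (\<Sum>t\<in>V. A u t * B t w))"
    using assms(2,5) by (intro sum.cong) (auto simp: is_inverse_on_def)
  also have "\<dots> = (\<Sum>u\<in>V. \<Sum>t\<in>V. B' v u * A u t * B t w)"
    by (simp add: sum_distrib_left mult.assoc)
  also have "\<dots> = (\<Sum>t\<in>V. (\<Sum>u\<in>V. B' v u * A u t) * B t w)"
    by (subst sum.swap) (simp add: sum_distrib_right)
  also have "\<dots> = (\<Sum>t\<in>V. if v = t then B t w else 0)"
    using assms(3,4) by (intro sum.cong) (auto simp: is_inverse_on_def)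
  also have "\<dots> = B v w"
    using assms(1,4) by simp
  finally show ?thesis .
qed

lemma inverse_on_eq:
  assumes "finite V" "is_inverse_on V A B" "v \<in> V" "w \<in> V"
  shows "inverse_on V A v w = B v w"
proof -
  have "is_inverse_on V A (inverse_on V A)"
    unfolding inverse_on_def using assms(2) by (rule someI[where x = B])
  with assms show ?thesis by (blast intro: is_inverse_on_unique)
qed

lemma sum_pm_eq_card_diff:
  fixes f :: "'a \<Rightarrow> 'b::comm_ring_1"
  assumes "finite S" "\<And>x. x \<in> S \<Longrightarrow> f x = e \<or> f x = - e"
  shows "(\<Sum>x\<in>S. f x) = e * (of_nat (card {x\<in>S. f x = e}) - of_nat (card {x\<in>S. f x \<noteq> e}))"
proof -
  have "(\<Sum>x\<in>S. f x) = (\<Sum>x\<in>S. if f x = e then e else - e)"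
    using assms(2) by (intro sum.cong) auto
  also have "\<dots> = of_nat (card {x\<in>S. f x = e}) * e - of_nat (card {x\<in>S. f x \<noteq> e}) * e"
    using assms(1) by (simp add: sum.If_cases Int_def sum_negf)
  finally show ?thesis by (simp add: algebra_simps)
qed

lemma RIn_in_verts_iff [simp]: "RIn p \<in> verts ovals \<longleftrightarrow> p \<in> ovals"
  by (auto simp: verts_def regions_def)

lemma Ov_in_verts_iff [simp]: "Ov x \<in> verts ovals \<longleftrightarrow> x \<in> ovals"
  by (auto simp: verts_def regions_def)

locale oval_nesting =
  fixes ovals :: "'a set" and par :: "'a \<Rightarrow> 'a option"
  assumes finite_ovals: "finite ovals"
    and par_in_ovals: "x \<in> ovals \<Longrightarrow> par x = Some p \<Longrightarrow> p \<in> ovals"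
    and acyclic_enc: "acyclic (enc_rel ovals par)"
begin

abbreviation enc :: "('a \<times> 'a) set" where
  "enc \<equiv> enc_rel ovals par"

lemma enc_iff: "(x, y) \<in> enc \<longleftrightarrow> x \<in> ovals \<and> par x = Some y"
  by (simp add: enc_rel_def)

lemma rtrancl_enc_top: "par x = None \<Longrightarrow> (x, y) \<in> enc\<^sup>* \<longleftrightarrow> y = x"
  by (auto elim: converse_rtranclE simp: enc_iff)

lemma trancl_enc_top: "par x = None \<Longrightarrow> (x, y) \<notin> enc\<^sup>+"
  by (auto elim: converse_tranclE simp: enc_iff)

lemma trancl_enc_step:
  assumes "x \<in> ovals" "par x = Some p"
  shows "(x, y) \<in> enc\<^sup>+ \<longleftrightarrow> (p, y) \<in> enc\<^sup>*"
proof -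
  have "(x, y) \<in> enc\<^sup>+ \<longleftrightarrow> (\<exists>z. (x, z) \<in> enc \<and> (z, y) \<in> enc\<^sup>*)"
    by (meson tranclD rtrancl_into_trancl2)
  with assms show ?thesis by (simp add: enc_iff)
qed

lemma rtrancl_enc_step:
  "x \<in> ovals \<Longrightarrow> par x = Some p \<Longrightarrow> (x, y) \<in> enc\<^sup>* \<longleftrightarrow> y = x \<or> (p, y) \<in> enc\<^sup>*"
  using trancl_enc_step[of x p y] by (metis rtrancl_eq_or_trancl trancl_into_rtrancl)

lemma enc_no_cycle: "(x, y) \<in> enc\<^sup>+ \<Longrightarrow> (y, x) \<in> enc\<^sup>* \<Longrightarrow> False"
  using acyclic_enc unfolding acyclic_def by (meson trancl_rtrancl_trancl)

lemma enc_irrefl: "(x, x) \<notin> enc\<^sup>+"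
  using acyclic_enc by (simp add: acyclic_def)

lemma par_neq_self: "x \<in> ovals \<Longrightarrow> par x \<noteq> Some x"
  using enc_irrefl[of x] by (auto simp: enc_iff r_into_trancl')

lemma trancl_enc_in_ovals: "(x, y) \<in> enc\<^sup>+ \<Longrightarrow> y \<in> ovals"
  by (induction rule: trancl_induct) (auto simp: enc_iff par_in_ovals)

lemma rtrancl_enc_comparable:
  assumes "(x, a) \<in> enc\<^sup>*" "(x, b) \<in> enc\<^sup>*"
  shows "(a, b) \<in> enc\<^sup>* \<or> (b, a) \<in> enc\<^sup>*"
proof -
  have "single_valued enc" by (auto simp: single_valued_def enc_iff)
  then show ?thesis using assms by (rule single_valued_confluent)
qed

lemma sibling_rtrancl_eq:
  assumes "(a, p) \<in> enc" "(b, p) \<in> enc" "(a, b) \<in> enc\<^sup>*"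
  shows "a = b"
proof (rule ccontr)
  assume "a \<noteq> b"
  with assms(3) have "(a, b) \<in> enc\<^sup>+" by (simp add: rtrancl_eq_or_trancl)
  with assms(1) have "(p, b) \<in> enc\<^sup>*" by (simp add: enc_iff trancl_enc_step)
  with assms(2) show False by (blast intro: enc_no_cycle)
qed

lemma finite_roots: "finite (roots ovals par)"
  using finite_ovals by (simp add: roots_def)

lemma finite_children: "finite (children ovals par p)"
  using finite_ovals by (simp add: children_def)

lemma depth_top: "par x = None \<Longrightarrow> depth ovals par x = 0"
  by (simp add: depth_def inside_def trancl_enc_top)

lemma depth_step:
  assumes "x \<in> ovals" "par x = Some p"
  shows "depth ovals par x = Suc (depth ovals par p)"
proof -
  have "{q. (x, q) \<in> enc\<^sup>+} = insert p {q. (p, q) \<in> enc\<^sup>+}"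
    using trancl_enc_step[OF assms] by (auto simp: rtrancl_eq_or_trancl)
  moreover have "p \<notin> {q. (p, q) \<in> enc\<^sup>+}"
    using enc_irrefl by simp
  moreover have "finite {q. (p, q) \<in> enc\<^sup>+}"
    using finite_ovals by (rule finite_subset[rotated]) (auto dest: trancl_enc_in_ovals)
  ultimately show ?thesis by (simp add: depth_def inside_def)
qed

lemma exists_root_above: "x \<in> ovals \<Longrightarrow> \<exists>\<rho>\<in>roots ovals par. (x, \<rho>) \<in> enc\<^sup>*"
proof (induction "depth ovals par x" arbitrary: x rule: less_induct)
  case less
  show ?case
  proof (cases "par x")
    case None
    with less.prems show ?thesis by (auto simp: roots_def)
  next
    case (Some p)
    with less.prems have "p \<in> ovals" "(x, p) \<in> enc" "depth ovals par p < depth ovals par x"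
      by (auto simp: par_in_ovals enc_iff depth_step)
    with less.hyps show ?thesis by (meson converse_rtrancl_into_rtrancl)
  qed
qed

lemma card_roots_above: "x \<in> ovals \<Longrightarrow> card {\<rho> \<in> roots ovals par. (x, \<rho>) \<in> enc\<^sup>*} = 1"
proof -
  assume "x \<in> ovals"
  then obtain \<rho> where \<rho>: "\<rho> \<in> roots ovals par" "(x, \<rho>) \<in> enc\<^sup>*"
    using exists_root_above by blast
  have "{\<rho>' \<in> roots ovals par. (x, \<rho>') \<in> enc\<^sup>*} = {\<rho>}"
  proof safe
    fix \<rho>' assume "\<rho>' \<in> roots ovals par" "(x, \<rho>') \<in> enc\<^sup>*"
    then have "(\<rho>', \<rho>) \<in> enc\<^sup>* \<or> (\<rho>, \<rho>') \<in> enc\<^sup>*"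
      using rtrancl_enc_comparable \<rho>(2) by blast
    moreover have "par \<rho>' = None" "par \<rho> = None"
      using \<open>\<rho>' \<in> roots ovals par\<close> \<rho>(1) by (auto simp: roots_def)
    ultimately show "\<rho>' = \<rho>" by (metis rtrancl_enc_top)
  qed (use \<rho> in simp_all)
  then show ?thesis by simp
qed

lemma card_children_above:
  assumes "p \<in> ovals"
  shows "card {c \<in> children ovals par p. (x, c) \<in> enc\<^sup>*} = (if (x, p) \<in> enc\<^sup>+ then 1 else 0)"
proof (cases "(x, p) \<in> enc\<^sup>+")
  case True
  then obtain c where c: "(x, c) \<in> enc\<^sup>*" "(c, p) \<in> enc"
    by (meson tranclD2)
  have one_child: "{c' \<in> children ovals par p. (x, c') \<in> enc\<^sup>*} = {c}"
  proof safe
    fix c' assume c': "c' \<in> children ovals par p" "(x, c') \<in> enc\<^sup>*"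
    then have "(c', p) \<in> enc" by (simp add: children_def enc_iff)
    then show "c' = c"
      using rtrancl_enc_comparable[OF c'(2) c(1)]
        sibling_rtrancl_eq[OF \<open>(c', p) \<in> enc\<close> c(2)] sibling_rtrancl_eq[OF c(2) \<open>(c', p) \<in> enc\<close>]
      by blast
  qed (use c in \<open>auto simp: children_def enc_iff\<close>)
  show ?thesis unfolding one_child using True by simp
next
  case False
  have no_child: "{c \<in> children ovals par p. (x, c) \<in> enc\<^sup>*} = {}"
  proof safe
    fix c assume "c \<in> children ovals par p" "(x, c) \<in> enc\<^sup>*"
    then have "(x, p) \<in> enc\<^sup>+" by (simp add: children_def enc_iff rtrancl_into_trancl1)
    with False show "c \<in> {}" by blast
  qed
  show ?thesis unfolding no_child using False by simp
qed

definition \<sigma> :: "'a \<Rightarrow> real" where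
  "\<sigma> x = (-1) ^ depth ovals par x"

lemma sigma_top: "par x = None \<Longrightarrow> \<sigma> x = 1"
  by (simp add: \<sigma>_def depth_top)

lemma sigma_step: "x \<in> ovals \<Longrightarrow> par x = Some p \<Longrightarrow> \<sigma> x = - \<sigma> p"
  by (simp add: \<sigma>_def depth_step)

lemma sigma_mult_self [simp]: "\<sigma> x * \<sigma> x = 1"
  by (simp add: \<sigma>_def flip: power_add)

lemma sigma_root: "x \<in> roots ovals par \<Longrightarrow> \<sigma> x = 1"
  by (simp add: roots_def sigma_top)

lemma sigma_child: "x \<in> children ovals par p \<Longrightarrow> \<sigma> x = - \<sigma> p"
  by (simp add: children_def sigma_step)

fun gamma_inv :: "'a gvert \<Rightarrow> 'a gvert \<Rightarrow> real" where
  "gamma_inv U1 U1 = -2" | "gamma_inv U1 U2 = 1" | "gamma_inv U1 U3 = 1" | "gamma_inv U1 ROut = 1"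
| "gamma_inv U1 (RIn p) = - \<sigma> p" | "gamma_inv U1 (Ov x) = 2 * \<sigma> x"
| "gamma_inv U2 U1 = 1" | "gamma_inv U2 U2 = 0" | "gamma_inv U2 U3 = -1/2" | "gamma_inv U2 ROut = -1/2"
| "gamma_inv U2 (RIn p) = \<sigma> p / 2" | "gamma_inv U2 (Ov x) = - \<sigma> x"
| "gamma_inv U3 U1 = 1" | "gamma_inv U3 U2 = -1/2" | "gamma_inv U3 U3 = 0" | "gamma_inv U3 ROut = -1/2"
| "gamma_inv U3 (RIn p) = \<sigma> p / 2" | "gamma_inv U3 (Ov x) = - \<sigma> x"
| "gamma_inv ROut U1 = 1" | "gamma_inv ROut U2 = -1/2" | "gamma_inv ROut U3 = -1/2"
| "gamma_inv ROut ROut = 0" | "gamma_inv ROut (RIn p) = 0" | "gamma_inv ROut (Ov x) = 0"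
| "gamma_inv (RIn p) U1 = - \<sigma> p" | "gamma_inv (RIn p) U2 = \<sigma> p / 2" | "gamma_inv (RIn p) U3 = \<sigma> p / 2"
| "gamma_inv (RIn p) ROut = 0" | "gamma_inv (RIn p) (RIn q) = 0"
| "gamma_inv (RIn p) (Ov x) = (if (p, x) \<in> enc\<^sup>* then \<sigma> p * \<sigma> x else 0)"
| "gamma_inv (Ov x) U1 = 2 * \<sigma> x" | "gamma_inv (Ov x) U2 = - \<sigma> x" | "gamma_inv (Ov x) U3 = - \<sigma> x"
| "gamma_inv (Ov x) ROut = 0"
| "gamma_inv (Ov x) (RIn p) = (if (p, x) \<in> enc\<^sup>* then \<sigma> p * \<sigma> x else 0)"
| "gamma_inv (Ov x) (Ov y) = (if (x, y) \<in> enc\<^sup>* \<or> (y, x) \<in> enc\<^sup>* then -2 * \<sigma> x * \<sigma> y else 0)"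

lemma gamma_inv_sym: "gamma_inv v w = gamma_inv w v"
  by (cases v; cases w) auto

lemma gamma_mat_sym: "gamma_mat ovals par v w = gamma_mat ovals par w v"
  by (auto simp: gamma_mat_def adjacent_def)

lemma finite_verts: "finite (verts ovals)"
  using finite_ovals by (simp add: verts_def regions_def)

lemma sum_verts:
  "(\<Sum>v\<in>verts ovals. f v)
     = f U1 + f U2 + f U3 + f ROut + (\<Sum>p\<in>ovals. f (RIn p)) + (\<Sum>x\<in>ovals. f (Ov x))"
proof -
  have verts_split: "verts ovals = {U1, U2, U3, ROut} \<union> (RIn ` ovals \<union> Ov ` ovals)"
    by (auto simp: verts_def regions_def)
  have "(\<Sum>v\<in>verts ovals. f v) = (\<Sum>v\<in>{U1, U2, U3, ROut}. f v) + (\<Sum>v\<in>RIn ` ovals \<union> Ov ` ovals. f v)"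
    unfolding verts_split by (rule sum.union_disjoint) (auto simp: finite_ovals)
  also have "(\<Sum>v\<in>RIn ` ovals \<union> Ov ` ovals. f v) = (\<Sum>p\<in>ovals. f (RIn p)) + (\<Sum>x\<in>ovals. f (Ov x))"
    using finite_ovals by (subst sum.union_disjoint) (auto simp: sum.reindex inj_on_def)
  finally show ?thesis by (simp add: add.assoc)
qed

lemma gamma_row_U1:
  "(\<Sum>u\<in>verts ovals. gamma_mat ovals par U1 u * f u) = f U1 + f U2 + f U3 + f ROut"
  by (simp add: sum_verts gamma_mat_def adjacent_def edges_def)

lemma gamma_row_U2:
  "(\<Sum>u\<in>verts ovals. gamma_mat ovals par U2 u * f u) = 2 * f U2 + f U1"
  by (simp add: sum_verts gamma_mat_def adjacent_def edges_def)

lemma gamma_row_U3: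
  "(\<Sum>u\<in>verts ovals. gamma_mat ovals par U3 u * f u) = 2 * f U3 + f U1"
  by (simp add: sum_verts gamma_mat_def adjacent_def edges_def)

lemma gamma_row_ROut:
  "(\<Sum>u\<in>verts ovals. gamma_mat ovals par ROut u * f u)
     = 2 * (1 - real (card (roots ovals par))) * f ROut + f U1 + (\<Sum>x\<in>roots ovals par. f (Ov x))"
proof -
  have "(\<Sum>x\<in>ovals. gamma_mat ovals par ROut (Ov x) * f (Ov x))
      = (\<Sum>x\<in>ovals. if x \<in> roots ovals par then f (Ov x) else 0)"
    by (rule sum.cong) (auto simp: gamma_mat_def adjacent_def edges_def roots_def)
  also have "\<dots> = (\<Sum>x\<in>roots ovals par. f (Ov x))"
    using finite_ovals by (simp add: sum.If_cases Int_def roots_def)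
  finally show ?thesis by (simp add: sum_verts gamma_mat_def adjacent_def edges_def)
qed

lemma gamma_row_RIn:
  assumes "p \<in> ovals"
  shows "(\<Sum>u\<in>verts ovals. gamma_mat ovals par (RIn p) u * f u)
     = 2 * (1 - real (card (children ovals par p))) * f (RIn p) + f (Ov p) + (\<Sum>x\<in>children ovals par p. f (Ov x))"
proof -
  let ?C = "children ovals par p"
  have "p \<notin> ?C"
    using par_neq_self assms by (auto simp: children_def)
  have "(\<Sum>x\<in>ovals. gamma_mat ovals par (RIn p) (Ov x) * f (Ov x))
      = (\<Sum>x\<in>ovals. if x \<in> insert p ?C then f (Ov x) else 0)"
    by (rule sum.cong) (auto simp: gamma_mat_def adjacent_def edges_def children_def)
  also have "\<dots> = (\<Sum>x\<in>{y\<in>ovals. y \<in> insert p ?C}. f (Ov x))"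
    using finite_ovals by (simp add: sum.inter_filter)
  also have "{y\<in>ovals. y \<in> insert p ?C} = insert p ?C"
    using assms by (auto simp: children_def)
  also have "(\<Sum>x\<in>insert p ?C. f (Ov x)) = f (Ov p) + (\<Sum>x\<in>?C. f (Ov x))"
    using \<open>p \<notin> ?C\<close> finite_children by simp
  finally have ovals_part: "(\<Sum>x\<in>ovals. gamma_mat ovals par (RIn p) (Ov x) * f (Ov x))
      = f (Ov p) + (\<Sum>x\<in>?C. f (Ov x))" .
  have "(\<Sum>q\<in>ovals. gamma_mat ovals par (RIn p) (RIn q) * f (RIn q))
      = (\<Sum>q\<in>ovals. if q = p then 2 * (1 - real (card ?C)) * f (RIn p) else 0)"
    by (rule sum.cong) (auto simp: gamma_mat_def adjacent_def edges_def)
  with assms finite_ovals have "(\<Sum>q\<in>ovals. gamma_mat ovals par (RIn p) (RIn q) * f (RIn q))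
      = 2 * (1 - real (card ?C)) * f (RIn p)" by simp
  with ovals_part show ?thesis by (simp add: sum_verts gamma_mat_def adjacent_def edges_def)
qed

lemma gamma_row_Ov:
  assumes "x \<in> ovals"
  shows "(\<Sum>u\<in>verts ovals. gamma_mat ovals par (Ov x) u * f u)
     = f (case par x of None \<Rightarrow> ROut | Some p \<Rightarrow> RIn p) + f (RIn x)"
proof -
  have no_oval_edges: "(\<Sum>y\<in>ovals. gamma_mat ovals par (Ov x) (Ov y) * f (Ov y)) = 0"
    by (rule sum.neutral) (auto simp: gamma_mat_def adjacent_def edges_def)
  show ?thesis
  proof (cases "par x")
    case None
    have "(\<Sum>q\<in>ovals. gamma_mat ovals par (Ov x) (RIn q) * f (RIn q))
        = (\<Sum>q\<in>ovals. if q = x then f (RIn x) else 0)"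
      by (rule sum.cong) (use None in \<open>auto simp: gamma_mat_def adjacent_def edges_def\<close>)
    with None no_oval_edges assms finite_ovals show ?thesis
      by (simp add: sum_verts gamma_mat_def adjacent_def edges_def)
  next
    case (Some p)
    have "p \<in> ovals" "p \<noteq> x"
      using par_in_ovals par_neq_self assms Some by auto
    have "(\<Sum>q\<in>ovals. gamma_mat ovals par (Ov x) (RIn q) * f (RIn q))
        = (\<Sum>q\<in>ovals. (if q = x then f (RIn x) else 0) + (if q = p then f (RIn p) else 0))"
      by (rule sum.cong) (use Some \<open>p \<noteq> x\<close> assms in \<open>auto simp: gamma_mat_def adjacent_def edges_def\<close>)
    also have "\<dots> = f (RIn x) + f (RIn p)"
      using finite_ovals assms \<open>p \<in> ovals\<close> by (simp add: sum.distrib)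
    finally show ?thesis
      using Some no_oval_edges by (simp add: sum_verts gamma_mat_def adjacent_def edges_def)
  qed
qed

lemma gamma_mat_gamma_inv_U:
  assumes "v \<in> {U1, U2, U3}" "w \<in> verts ovals"
  shows "(\<Sum>u\<in>verts ovals. gamma_mat ovals par v u * gamma_inv u w) = (if v = w then 1 else 0)"
  using assms by (cases w) (auto simp: gamma_row_U1 gamma_row_U2 gamma_row_U3)

lemma sum_roots_gamma_inv_RIn:
  assumes "q \<in> ovals"
  shows "(\<Sum>x\<in>roots ovals par. gamma_inv (Ov x) (RIn q)) = \<sigma> q"
proof -
  have "(\<Sum>x\<in>roots ovals par. gamma_inv (Ov x) (RIn q))
      = (\<Sum>x\<in>roots ovals par. if (q, x) \<in> enc\<^sup>* then \<sigma> q else 0)"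
    by (intro sum.cong) (auto simp: sigma_root)
  also have "\<dots> = \<sigma> q"
    using card_roots_above[OF assms] by (simp add: sum_if_const finite_roots)
  finally show ?thesis .
qed

lemma sum_roots_gamma_inv_Ov:
  assumes "y \<in> ovals"
  shows "(\<Sum>x\<in>roots ovals par. gamma_inv (Ov x) (Ov y)) = -2 * \<sigma> y"
proof -
  have "(\<Sum>x\<in>roots ovals par. gamma_inv (Ov x) (Ov y))
      = (\<Sum>x\<in>roots ovals par. if (y, x) \<in> enc\<^sup>* then -2 * \<sigma> y else 0)"
    by (intro sum.cong) (auto simp: sigma_root roots_def rtrancl_enc_top)
  also have "\<dots> = -2 * \<sigma> y"
    using card_roots_above[OF assms] by (simp add: sum_if_const finite_roots)
  finally show ?thesis .
qed

lemma sum_children_gamma_inv_RIn: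
  assumes "p \<in> ovals"
  shows "(\<Sum>x\<in>children ovals par p. gamma_inv (Ov x) (RIn q))
    = (if (q, p) \<in> enc\<^sup>+ then - (\<sigma> q * \<sigma> p) else 0)"
proof -
  have "(\<Sum>x\<in>children ovals par p. gamma_inv (Ov x) (RIn q))
      = (\<Sum>x\<in>children ovals par p. if (q, x) \<in> enc\<^sup>* then - (\<sigma> q * \<sigma> p) else 0)"
    by (intro sum.cong) (auto simp: sigma_child)
  also have "\<dots> = (if (q, p) \<in> enc\<^sup>+ then - (\<sigma> q * \<sigma> p) else 0)"
    using card_children_above[OF assms] by (simp add: sum_if_const finite_children)
  finally show ?thesis .
qed

lemma sum_children_gamma_inv_Ov:
  assumes "p \<in> ovals"
  shows "(\<Sum>x\<in>children ovals par p. gamma_inv (Ov x) (Ov y))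
    = (if (p, y) \<in> enc\<^sup>* then 2 * card (children ovals par p) * \<sigma> p * \<sigma> y
       else if (y, p) \<in> enc\<^sup>+ then 2 * \<sigma> p * \<sigma> y else 0)"
proof (cases "(p, y) \<in> enc\<^sup>*")
  case True
  then have "(\<Sum>x\<in>children ovals par p. gamma_inv (Ov x) (Ov y))
      = (\<Sum>x\<in>children ovals par p. 2 * \<sigma> p * \<sigma> y)"
    by (intro sum.cong) (auto simp: sigma_child children_def rtrancl_enc_step)
  with True show ?thesis by simp
next
  case False
  then have "(\<Sum>x\<in>children ovals par p. gamma_inv (Ov x) (Ov y))
      = (\<Sum>x\<in>children ovals par p. if (y, x) \<in> enc\<^sup>* then 2 * \<sigma> p * \<sigma> y else 0)"
    by (intro sum.cong) (auto simp: sigma_child children_def rtrancl_enc_step)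
  also have "\<dots> = (if (y, p) \<in> enc\<^sup>+ then 2 * \<sigma> p * \<sigma> y else 0)"
    using card_children_above[OF assms] by (simp add: sum_if_const finite_children)
  finally show ?thesis using False by simp
qed

lemma gamma_mat_gamma_inv_ROut:
  assumes "w \<in> verts ovals"
  shows "(\<Sum>u\<in>verts ovals. gamma_mat ovals par ROut u * gamma_inv u w) = (if ROut = w then 1 else 0)"
proof -
  let ?R = "roots ovals par"
  have "2 * (1 - real (card ?R)) * gamma_inv ROut w + gamma_inv U1 w + (\<Sum>x\<in>?R. gamma_inv (Ov x) w)
      = (if ROut = w then 1 else 0)"
  proof (cases w)
    case U1
    then have "(\<Sum>x\<in>?R. gamma_inv (Ov x) w) = (\<Sum>x\<in>?R. 2)"
      by (intro sum.cong) (auto simp: sigma_root)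
    with U1 show ?thesis by (simp add: algebra_simps)
  next
    case U2
    then have "(\<Sum>x\<in>?R. gamma_inv (Ov x) w) = (\<Sum>x\<in>?R. -1)"
      by (intro sum.cong) (auto simp: sigma_root)
    with U2 show ?thesis by (simp add: algebra_simps)
  next
    case U3
    then have "(\<Sum>x\<in>?R. gamma_inv (Ov x) w) = (\<Sum>x\<in>?R. -1)"
      by (intro sum.cong) (auto simp: sigma_root)
    with U3 show ?thesis by (simp add: algebra_simps)
  next
    case (RIn q)
    with assms show ?thesis using sum_roots_gamma_inv_RIn[of q] by simp
  next
    case (Ov y)
    with assms show ?thesis using sum_roots_gamma_inv_Ov[of y] by simp
  qed simp
  then show ?thesis by (simp add: gamma_row_ROut)
qed

lemma gamma_mat_gamma_inv_RIn:
  assumes "p \<in> ovals" "w \<in> verts ovals"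
  shows "(\<Sum>u\<in>verts ovals. gamma_mat ovals par (RIn p) u * gamma_inv u w) = (if RIn p = w then 1 else 0)"
proof -
  let ?C = "children ovals par p"
  have "2 * (1 - real (card ?C)) * gamma_inv (RIn p) w + gamma_inv (Ov p) w + (\<Sum>x\<in>?C. gamma_inv (Ov x) w)
      = (if RIn p = w then 1 else 0)"
  proof (cases w)
    case U1
    then have "(\<Sum>x\<in>?C. gamma_inv (Ov x) w) = (\<Sum>x\<in>?C. -2 * \<sigma> p)"
      by (intro sum.cong) (auto simp: sigma_child)
    with U1 show ?thesis by (simp add: algebra_simps)
  next
    case U2
    then have "(\<Sum>x\<in>?C. gamma_inv (Ov x) w) = (\<Sum>x\<in>?C. \<sigma> p)"
      by (intro sum.cong) (auto simp: sigma_child)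
    with U2 show ?thesis by (simp add: algebra_simps)
  next
    case U3
    then have "(\<Sum>x\<in>?C. gamma_inv (Ov x) w) = (\<Sum>x\<in>?C. \<sigma> p)"
      by (intro sum.cong) (auto simp: sigma_child)
    with U3 show ?thesis by (simp add: algebra_simps)
  next
    case (RIn q)
    then show ?thesis
      using sum_children_gamma_inv_RIn[OF assms(1)] enc_irrefl[of p]
      by (auto simp: rtrancl_eq_or_trancl mult.commute)
  next
    case (Ov y)
    then show ?thesis
      using sum_children_gamma_inv_Ov[OF assms(1)] by (auto simp: rtrancl_eq_or_trancl algebra_simps)
  qed simp
  then show ?thesis by (simp add: gamma_row_RIn[OF assms(1)])
qed

lemma gamma_mat_gamma_inv_Ov:
  assumes "x \<in> ovals" "w \<in> verts ovals"
  shows "(\<Sum>u\<in>verts ovals. gamma_mat ovals par (Ov x) u * gamma_inv u w) = (if Ov x = w then 1 else 0)"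
proof (cases "par x")
  case None
  then have "gamma_inv ROut w + gamma_inv (RIn x) w = (if Ov x = w then 1 else 0)"
    using assms by (cases w) (auto simp: sigma_top rtrancl_enc_top)
  with None show ?thesis by (simp add: gamma_row_Ov[OF assms(1)])
next
  case (Some p)
  have "(p, x) \<notin> enc\<^sup>*"
    using Some assms(1) enc_no_cycle trancl_enc_step by blast
  with Some have "gamma_inv (RIn p) w + gamma_inv (RIn x) w = (if Ov x = w then 1 else 0)"
    using assms sigma_step[OF assms(1) Some] rtrancl_enc_step[OF assms(1) Some]
    by (cases w) (auto split: if_splits)
  with Some show ?thesis by (simp add: gamma_row_Ov[OF assms(1)])
qed

lemma is_inverse_on_gamma_inv: "is_inverse_on (verts ovals) (gamma_mat ovals par) gamma_inv"
proof -
  have right: "(\<Sum>u\<in>verts ovals. gamma_mat ovals par v u * gamma_inv u w) = (if v = w then 1 else 0)"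
    if "v \<in> verts ovals" "w \<in> verts ovals" for v w
    using that
    by (cases v) (simp_all add: gamma_mat_gamma_inv_U gamma_mat_gamma_inv_ROut gamma_mat_gamma_inv_RIn gamma_mat_gamma_inv_Ov)
  moreover have "(\<Sum>u\<in>verts ovals. gamma_inv v u * gamma_mat ovals par u w) = (if v = w then 1 else 0)"
    if "v \<in> verts ovals" "w \<in> verts ovals" for v w
    using right[OF that(2,1)] by (simp add: gamma_inv_sym gamma_mat_sym mult.commute eq_commute)
  ultimately show ?thesis by (simp add: is_inverse_on_def)
qed

lemma sigma_mult_gamma_inv_Ov:
  "\<sigma> x * gamma_inv (Ov x) U1 = 2"
  "\<sigma> x * gamma_inv (Ov x) U2 = -1"
  "\<sigma> x * gamma_inv (Ov x) U3 = -1"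
  "\<sigma> x * gamma_inv (Ov x) ROut = 0"
  "\<sigma> x * gamma_inv (Ov x) (RIn p) = (if (p, x) \<in> enc\<^sup>* then \<sigma> p else 0)"
  "\<sigma> x * gamma_inv (Ov x) (Ov y) = (if (x, y) \<in> enc\<^sup>* \<or> (y, x) \<in> enc\<^sup>* then -2 * \<sigma> y else 0)"
  using sigma_mult_self[of x] by (simp_all add: algebra_simps)

lemma invertible_on_gamma_mat: "invertible_on (verts ovals) (gamma_mat ovals par)"
  using is_inverse_on_gamma_inv by (auto simp: invertible_on_def)

lemma inverse_on_gamma_mat:
  "v \<in> verts ovals \<Longrightarrow> w \<in> verts ovals \<Longrightarrow> inverse_on (verts ovals) (gamma_mat ovals par) v w = gamma_inv v w"
  using inverse_on_eq[OF finite_verts is_inverse_on_gamma_inv] .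

end

locale signed_oval_nesting = oval_nesting +
  fixes eps :: "'a \<Rightarrow> int"
  assumes eps_sign: "x \<in> ovals \<Longrightarrow> eps x = 1 \<or> eps x = -1"
begin

lemma s_vec_Ov: "s_vec ovals par eps (Ov x) = - \<sigma> x * eps x"
  by (simp add: s_vec_def \<sigma>_def)

lemma c_vec_eq_sum_ovals:
  assumes "v \<in> verts ovals"
  shows "c_vec ovals par eps v = 2 * (\<Sum>x\<in>ovals. eps x * (\<sigma> x * gamma_inv (Ov x) v))"
proof -
  have "c_vec ovals par eps v = -2 * (\<Sum>w\<in>verts ovals. s_vec ovals par eps w * gamma_inv w v)"
    using assms by (simp add: c_vec_def inverse_on_gamma_mat)
  also have "\<dots> = -2 * (\<Sum>x\<in>ovals. s_vec ovals par eps (Ov x) * gamma_inv (Ov x) v)"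
    by (simp add: sum_verts s_vec_def)
  finally show ?thesis
    by (simp add: s_vec_Ov sum_distrib_left sum_negf algebra_simps)
qed

lemma sum_eps_filter:
  "(\<Sum>x\<in>{x\<in>ovals. P x}. real_of_int (eps x))
     = real (card {x\<in>ovals. eps x = 1 \<and> P x}) - real (card {x\<in>ovals. eps x = -1 \<and> P x})"
proof -
  have "{x\<in>{x\<in>ovals. P x}. real_of_int (eps x) = 1} = {x\<in>ovals. eps x = 1 \<and> P x}"
    by auto
  moreover have "{x\<in>{x\<in>ovals. P x}. real_of_int (eps x) \<noteq> 1} = {x\<in>ovals. eps x = -1 \<and> P x}"
    using eps_sign by force
  ultimately show ?thesis
    using sum_pm_eq_card_diff[of "{x\<in>ovals. P x}" "\<lambda>x. real_of_int (eps x)" 1] finite_ovals eps_sign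
    by force
qed

lemma c_vec_U1: "c_vec ovals par eps U1 = -4 * (real (Lam_minus ovals eps) - real (Lam_plus ovals eps))"
proof -
  have "c_vec ovals par eps U1 = 4 * (\<Sum>x\<in>ovals. real_of_int (eps x))"
    by (simp add: c_vec_eq_sum_ovals verts_def sigma_mult_gamma_inv_Ov sum_distrib_left mult.commute)
  then show ?thesis
    using sum_eps_filter[of "\<lambda>_. True"] by (simp add: Lam_plus_def Lam_minus_def)
qed

lemma c_vec_U23:
  assumes "u = U2 \<or> u = U3"
  shows "c_vec ovals par eps u = 2 * (real (Lam_minus ovals eps) - real (Lam_plus ovals eps))"
proof -
  have "u \<in> verts ovals" using assms by (auto simp: verts_def)
  then have "c_vec ovals par eps u = -2 * (\<Sum>x\<in>ovals. real_of_int (eps x))"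
    using assms by (auto simp: c_vec_eq_sum_ovals sigma_mult_gamma_inv_Ov sum_negf)
  then show ?thesis
    using sum_eps_filter[of "\<lambda>_. True"] by (simp add: Lam_plus_def Lam_minus_def)
qed

lemma c_vec_region:
  assumes "R \<in> regions ovals"
  shows "c_vec ovals par eps R
    = (-1) ^ vpar ovals par R * 2 * (real (Lam_minus_R ovals par eps R) - real (Lam_plus_R ovals par eps R))"
proof -
  from assms consider "R = ROut" | p where "p \<in> ovals" "R = RIn p"
    by (auto simp: regions_def)
  then show ?thesis
  proof cases
    case 1
    then show ?thesis
      by (simp add: c_vec_eq_sum_ovals verts_def regions_def sigma_mult_gamma_inv_Ov Lam_minus_R_def Lam_plus_R_def)
  next
    case (2 p)
    let ?D = "{x\<in>ovals. region_in_disk ovals par R x}"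
    have "c_vec ovals par eps R
        = 2 * (\<Sum>x\<in>ovals. \<sigma> p * (if (p, x) \<in> enc\<^sup>* then real_of_int (eps x) else 0))"
      using 2 by (simp add: c_vec_eq_sum_ovals sigma_mult_gamma_inv_Ov)
        (intro sum.cong refl; simp add: mult.commute)
    also have "\<dots> = 2 * \<sigma> p * (\<Sum>x\<in>{x\<in>ovals. (p, x) \<in> enc\<^sup>*}. real_of_int (eps x))"
      by (simp add: sum_distrib_left sum.inter_filter finite_ovals mult.assoc)
    also have "{x\<in>ovals. (p, x) \<in> enc\<^sup>*} = ?D"
      using 2 by (auto simp: inside_def rtrancl_eq_or_trancl)
    also have "(\<Sum>x\<in>?D. real_of_int (eps x))
        = real (Lam_plus_R ovals par eps R) - real (Lam_minus_R ovals par eps R)"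
      by (simp add: sum_eps_filter Lam_plus_R_def Lam_minus_R_def)
    finally show ?thesis
      using 2 by (simp add: \<sigma>_def algebra_simps)
  qed
qed

lemma sum_eps_injective_pairs:
  assumes "y \<in> ovals"
  shows "(\<Sum>x\<in>{x\<in>ovals. injective_pair ovals par y x}. real_of_int (eps x))
    = eps y * (real (Pi_minus ovals par eps y) - real (Pi_plus ovals par eps y))"
proof -
  let ?P = "{x\<in>ovals. injective_pair ovals par y x}"
  have "eps x = eps y \<or> eps x = - eps y" if "x \<in> ?P" for x
    using that eps_sign[of x] eps_sign[OF assms] by auto
  then have "(\<Sum>x\<in>?P. real_of_int (eps x))
      = eps y * (real (card {x\<in>?P. eps x = eps y}) - real (card {x\<in>?P. eps x \<noteq> eps y}))"
    using sum_pm_eq_card_diff[of ?P "\<lambda>x. real_of_int (eps x)" "eps y"] finite_ovals by force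
  moreover have "{x\<in>?P. eps x = eps y} = {z\<in>ovals. injective_pair ovals par y z \<and> eps z = eps y}"
    "{x\<in>?P. eps x \<noteq> eps y} = {z\<in>ovals. injective_pair ovals par y z \<and> eps z \<noteq> eps y}"
    by auto
  ultimately show ?thesis
    unfolding Pi_minus_def Pi_plus_def by simp
qed

lemma c_vec_Ov:
  assumes "y \<in> ovals"
  shows "c_vec ovals par eps (Ov y)
    = s_vec ovals par eps (Ov y) * (4 + 4 * (real (Pi_minus ovals par eps y) - real (Pi_plus ovals par eps y)))"
proof -
  let ?P = "{x\<in>ovals. injective_pair ovals par y x}"
  let ?T = "{x\<in>ovals. (x, y) \<in> enc\<^sup>* \<or> (y, x) \<in> enc\<^sup>*}"
  have "?T = insert y ?P" "y \<notin> ?P"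
    using assms enc_irrefl by (auto simp: injective_pair_def inside_def rtrancl_eq_or_trancl)
  then have sum_T: "(\<Sum>x\<in>?T. real_of_int (eps x)) = eps y + (\<Sum>x\<in>?P. real_of_int (eps x))"
    using finite_ovals by simp
  have "c_vec ovals par eps (Ov y)
      = 2 * (\<Sum>x\<in>ovals. -2 * \<sigma> y * (if (x, y) \<in> enc\<^sup>* \<or> (y, x) \<in> enc\<^sup>* then real_of_int (eps x) else 0))"
    using assms
    by (simp add: c_vec_eq_sum_ovals sigma_mult_gamma_inv_Ov) (intro sum.cong refl; simp add: mult.commute)
  also have "\<dots> = -4 * \<sigma> y * (\<Sum>x\<in>?T. real_of_int (eps x))"
    by (simp add: sum_distrib_left sum.inter_filter finite_ovals mult.assoc)
  finally show ?thesis
    by (simp add: sum_T sum_eps_injective_pairs[OF assms] s_vec_Ov algebra_simps)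
qed

end

theorem proposition1p7:
  fixes ovals :: "'a set" and par :: "'a \<Rightarrow> 'a option" and eps :: "'a \<Rightarrow> int"
  assumes "even_scheme ovals par eps"
  shows "invertible_on (verts ovals) (gamma_mat ovals par)
    \<and> c_vec ovals par eps U1 = -4 * (real (Lam_minus ovals eps) - real (Lam_plus ovals eps))
    \<and> c_vec ovals par eps U2 = 2 * (real (Lam_minus ovals eps) - real (Lam_plus ovals eps))
    \<and> c_vec ovals par eps U3 = 2 * (real (Lam_minus ovals eps) - real (Lam_plus ovals eps))
    \<and> (\<forall>R\<in>regions ovals. c_vec ovals par eps R =
         (-1) ^ vpar ovals par R * 2 * (real (Lam_minus_R ovals par eps R) - real (Lam_plus_R ovals par eps R)))
    \<and> (\<forall>x\<in>ovals. c_vec ovals par eps (Ov x) =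
         s_vec ovals par eps (Ov x) * (4 + 4 * (real (Pi_minus ovals par eps x) - real (Pi_plus ovals par eps x))))"
proof -
  interpret signed_oval_nesting ovals par eps
    using assms by unfold_locales (auto simp: even_scheme_def)
  show ?thesis
    using invertible_on_gamma_mat c_vec_U1 c_vec_U23 c_vec_region c_vec_Ov by blast
qed

end
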